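(* Let $K,N\ge 1$, let $c_1^M,\dots,c_K^M>0$ with $C^M=\sum_k c_k^M$, let $0\le r_1<r_2<\dots<r_K$, let $p=(p_1,\dots,p_N)$ with $p_i\ge 0$ and $p_{\max}=\max_ip_i$, and let $\epsilon$ be a random vector with a known distribution on $[0,1]^N$. With $\mathcal{F}_c$, $k_c$ and $\mathrm{cost}(\epsilon,c)$ as defined in the context, the function $f(c)=\mathbb{E}_\epsilon[\mathrm{cost}(\epsilon,c)]$ is convex on $\mathcal{F}_c$, and the output $\bar c_J$ of the projected stochastic subgradient descent algorithm described in the context satisfies $\mathbb{E}[f(\bar c_J)]\to\min_{c\in\mathcal{F}_c}f(c)$ as $J\to\infty$.
   Context: Feasible region: $\mathcal{F}_c=\{c\in\mathbb{R}^N: c\ge 0,\ \sum_{i=1}^N c_i\le C^M\}$. For $\epsilon\in[0,1]^N$ and $c\in\mathcal{F}_c$, the critical type is $k_c=\min\{q\in\{1,\dots,K\}:\sum_i\epsilon_ic_i\le\sum_{k=1}^q c_k^M\}$, and $\mathrm{cost}(\epsilon,c)=\sum_{k<k_c}(r_k-r_{k_c})c_k^M+\sum_{i=1}^N c_i(r_{k_c}\epsilon_i-p_i)$ (the optimal net cost of a cryptomining facility with $K$ machine types of capacities $c_k^M$ and per-unit mining rewards $r_k$, committing capacities $c_i$ to $N$ ancillary service programs with prices $p_i$ and deployment ratios $\epsilon_i$). Algorithm: let $D=C^M$ if $N=1$ and $D=\sqrt2\,C^M$ if $N\ge 2$; fix $M\ge1$ and $J\ge 1$, step sizes $\alpha_j=\frac{D}{\sqrt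 N\max(r_K,p_{\max})\sqrt j}$. Start from some $c^{(1)}\in\mathcal{F}_c$. For $j=1,\dots,J$: draw $M$ independent samples $\epsilon^{(1)},\dots,\epsilon^{(M)}$ of $\epsilon$, compute $g_j=\frac1M\sum_{m=1}^M\big(r_{k_c^{(m)}}\epsilon^{(m)}-p\big)$ where $k_c^{(m)}$ is the critical type for $(\epsilon^{(m)},c^{(j)})$, set $c^{(j+1)}$ to be the Euclidean projection of $c^{(j)}-\alpha_jg_j$ onto $\mathcal{F}_c$. Output $\bar c_J=\frac1J\sum_{j=1}^Jc^{(j)}$. *)

theory Defs
  imports "HOL-Probability.Probability"
begin

text \<open>Ancillary-service index set = the finite type 'n (N = CARD('n));
machine types are indexed by 1..K (functions on nat).\<close>

definition feasible_set :: "real \<Rightarrow> (real^'n) set" where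
  "feasible_set CM = {c. (\<forall>i. 0 \<le> c $ i) \<and> (\<Sum>i\<in>UNIV. c $ i) \<le> CM}"

definition crit_type :: "nat \<Rightarrow> (nat \<Rightarrow> real) \<Rightarrow> real^'n \<Rightarrow> real^'n \<Rightarrow> nat" where
  "crit_type K cM e c =
     (LEAST q. q \<in> {1..K} \<and> (\<Sum>i\<in>UNIV. e $ i * c $ i) \<le> (\<Sum>k=1..q. cM k))"

definition cost :: "nat \<Rightarrow> (nat \<Rightarrow> real) \<Rightarrow> (nat \<Rightarrow> real) \<Rightarrow> real^'n \<Rightarrow> real^'n \<Rightarrow> real^'n \<Rightarrow> real" where
  "cost K cM r p e c =
     (let kc = crit_type K cM e c in
        (\<Sum>k\<in>{1..<kc}. (r k - r kc) * cM k) + (\<Sum>i\<in>UNIV. c $ i * (r kc * e $ i - p $ i)))"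

definition exp_cost :: "nat \<Rightarrow> (nat \<Rightarrow> real) \<Rightarrow> (nat \<Rightarrow> real) \<Rightarrow> real^'n \<Rightarrow> (real^'n) measure \<Rightarrow> real^'n \<Rightarrow> real" where
  "exp_cost K cM r p Deps c = (\<integral>e. cost K cM r p e c \<partial>Deps)"

definition pmax :: "real^'n \<Rightarrow> real" where
  "pmax p = Max (range (\<lambda>i. p $ i))"

definition step_size :: "nat \<Rightarrow> (nat \<Rightarrow> real) \<Rightarrow> real^'n \<Rightarrow> real \<Rightarrow> nat \<Rightarrow> real" where
  "step_size K r p CM j =
     (let N = CARD('n); D = (if N = 1 then CM else sqrt 2 * CM) in
        D / (sqrt (real N) * max (r K) (pmax p) * sqrt (real j)))"

definition stoch_grad :: "nat \<Rightarrow> (nat \<Rightarrow> real) \<Rightarrow> (nat \<Rightarrow> real) \<Rightarrow> real^'n \<Rightarrow> nat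
     \<Rightarrow> (nat \<times> nat \<Rightarrow> real^'n) \<Rightarrow> nat \<Rightarrow> real^'n \<Rightarrow> real^'n" where
  "stoch_grad K cM r p Ms w j c =
     (1 / real Ms) *\<^sub>R (\<Sum>m=1..Ms. (r (crit_type K cM (w (j, m)) c) *\<^sub>R w (j, m) - p))"

text \<open>sgd_iter ... n = c^(n+1): the (n+1)-th iterate of projected SGD started at c1.\<close>
primrec sgd_iter :: "nat \<Rightarrow> (nat \<Rightarrow> real) \<Rightarrow> (nat \<Rightarrow> real) \<Rightarrow> real^'n \<Rightarrow> nat
     \<Rightarrow> real^'n \<Rightarrow> (nat \<times> nat \<Rightarrow> real^'n) \<Rightarrow> nat \<Rightarrow> real^'n" where
  "sgd_iter K cM r p Ms c1 w 0 = c1"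
| "sgd_iter K cM r p Ms c1 w (Suc n) =
     (let CM = (\<Sum>k=1..K. cM k); c = sgd_iter K cM r p Ms c1 w n in
       closest_point (feasible_set CM)
         (c - step_size K r p CM (Suc n) *\<^sub>R stoch_grad K cM r p Ms w (Suc n) c))"

definition sgd_output :: "nat \<Rightarrow> (nat \<Rightarrow> real) \<Rightarrow> (nat \<Rightarrow> real) \<Rightarrow> real^'n \<Rightarrow> nat
     \<Rightarrow> real^'n \<Rightarrow> (nat \<times> nat \<Rightarrow> real^'n) \<Rightarrow> nat \<Rightarrow> real^'n" where
  "sgd_output K cM r p Ms c1 w J =
     (1 / real J) *\<^sub>R (\<Sum>j=1..J. sgd_iter K cM r p Ms c1 w (j - 1))"

end

theory Submission
  imports Defs
begin

text \<open>
  For fixed deployment ratios e the cost depends on c only through t = e \<bullet> c and p \<bullet> c: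
  if \<psi>_k(t) denotes the net mining cost when type k is critical, then
  cost(e, c) = \<psi>_{k_c}(e \<bullet> c) - p \<bullet> c. Because r is increasing, the critical type maximizes
  \<psi>_k(t) over k, so cost(e, -) is a maximum of affine functions, convex with subgradient
  r_{k_c} e - p, and f is convex as its expectation.

  Pathwise, g_j is a subgradient of the empirical cost of round j (the average of the M sample
  costs), so the classical estimate for projected subgradient steps of size a / sqrt j
  (nonexpansive projection, telescoping of the squared distances to a fixed feasible c) bounds
  the empirical regret of the first J rounds by O(sqrt J). Since c^(j) depends only on the
  samples of earlier rounds, the expected empirical cost of round j at c^(j) is E f(c^(j)).
  Hence the expected regret is O(sqrt J), and Jensen's inequality gives
  E f(bar c_J) \<le> f(c) + O(1 / sqrt J) for every feasible c.
\<close>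

section \<open>Projected subgradient method\<close>

lemma sum_inverse_sqrt_le: "(\<Sum>j=1..J. 1 / sqrt (real j)) \<le> 2 * sqrt (real J)"
proof (induction J)
  case (Suc J)
  define a where "a = sqrt (real J)"
  define b where "b = sqrt (real (Suc J))"
  have "0 < b" "a\<^sup>2 = real J" "b\<^sup>2 = real J + 1"
    unfolding a_def b_def by auto
  moreover have "2 * a * b \<le> a\<^sup>2 + b\<^sup>2"
    using sum_squares_bound[of a b] by (simp add: power2_eq_square)
  ultimately have "1 / b \<le> 2 * (b - a)"
    by (simp add: field_simps power2_eq_square)
  then show ?case
    using Suc unfolding a_def b_def by simp
qed simp

lemma sum_weighted_differences_le:
  fixes d \<beta> :: "nat \<Rightarrow> real"
  assumes "\<And>j. d j \<le> B" and "\<And>j. 0 \<le> \<beta> j" and "incseq \<beta>"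
  shows "(\<Sum>j=1..J. \<beta> j * (d (j - 1) - d j)) \<le> \<beta> J * (B - d J)"
proof (induction J)
  case 0
  then show ?case using assms(1,2)[of 0] by simp
next
  case (Suc J)
  have "\<beta> J * (B - d J) \<le> \<beta> (Suc J) * (B - d J)"
    using assms(1)[of J] incseq_SucD[OF assms(3)] by (intro mult_right_mono) auto
  then show ?case
    using Suc by (simp add: algebra_simps)
qed

lemma closest_point_step_inner_le:
  fixes x c g :: "'a::euclidean_space"
  assumes "convex S" "closed S" "c \<in> S" and "0 < \<alpha>"
  shows "g \<bullet> (x - c) \<le>
    ((norm (x - c))\<^sup>2 - (norm (closest_point S (x - \<alpha> *\<^sub>R g) - c))\<^sup>2) / (2 * \<alpha>)
      + \<alpha> / 2 * (norm g)\<^sup>2"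
proof -
  have "norm (closest_point S (x - \<alpha> *\<^sub>R g) - c) \<le> norm ((x - c) - \<alpha> *\<^sub>R g)"
    using closest_point_lipschitz[OF assms(1,2), of "x - \<alpha> *\<^sub>R g" c] assms(3)
    by (auto simp: dist_norm closest_point_self algebra_simps)
  then have "(norm (closest_point S (x - \<alpha> *\<^sub>R g) - c))\<^sup>2 \<le> (norm ((x - c) - \<alpha> *\<^sub>R g))\<^sup>2"
    by (simp add: power_mono)
  also have "\<dots> = (norm (x - c))\<^sup>2 - 2 * \<alpha> * (g \<bullet> (x - c)) + \<alpha>\<^sup>2 * (norm g)\<^sup>2"
    unfolding power2_norm_eq_inner
    by (simp add: inner_diff_left inner_diff_right inner_commute power2_eq_square algebra_simps)
  finally show ?thesis
    using assms(4) by (simp add: field_simps power2_eq_square)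
qed

lemma projected_subgradient_regret:
  fixes x g :: "nat \<Rightarrow> 'a::euclidean_space"
  assumes S: "convex S" "closed S" and c: "c \<in> S" and a: "0 < a"
    and x_Suc: "\<And>j. x (Suc j) = closest_point S (x j - (a / sqrt (Suc j)) *\<^sub>R g (Suc j))"
    and diam: "\<And>j. norm (x j - c) \<le> D"
    and g: "\<And>j. j \<in> {1..J} \<Longrightarrow> norm (g j) \<le> G"
  shows "(\<Sum>j=1..J. g j \<bullet> (x (j - 1) - c)) \<le> (D\<^sup>2 / (2 * a) + a * G\<^sup>2) * sqrt J"
proof -
  define d where "d j = (norm (x j - c))\<^sup>2" for j :: nat
  define \<beta> where "\<beta> j = sqrt j / (2 * a)" for j :: nat
  have d_le: "d j \<le> D\<^sup>2" for j
    unfolding d_def using diam[of j] by (intro power_mono) auto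
  have step: "g j \<bullet> (x (j - 1) - c) \<le> \<beta> j * (d (j - 1) - d j) + a / sqrt j / 2 * G\<^sup>2"
    if j: "j \<in> {1..J}" for j
  proof -
    have x_j: "x j = closest_point S (x (j - 1) - (a / sqrt j) *\<^sub>R g j)"
      using x_Suc[of "j - 1"] j by simp
    have "g j \<bullet> (x (j - 1) - c) \<le> (d (j - 1) - d j) / (2 * (a / sqrt j)) + a / sqrt j / 2 * (norm (g j))\<^sup>2"
      unfolding d_def x_j by (rule closest_point_step_inner_le[OF S c]) (use a j in simp)
    also have "\<dots> = \<beta> j * (d (j - 1) - d j) + a / sqrt j / 2 * (norm (g j))\<^sup>2"
      unfolding \<beta>_def by simp
    also have "\<dots> \<le> \<beta> j * (d (j - 1) - d j) + a / sqrt j / 2 * G\<^sup>2"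
      using g[OF j] a by (intro add_left_mono mult_left_mono power_mono) auto
    finally show ?thesis .
  qed
  have "(\<Sum>j=1..J. g j \<bullet> (x (j - 1) - c))
      \<le> (\<Sum>j=1..J. \<beta> j * (d (j - 1) - d j) + a / sqrt j / 2 * G\<^sup>2)"
    by (rule sum_mono) (rule step)
  also have "\<dots> = (\<Sum>j=1..J. \<beta> j * (d (j - 1) - d j)) + G\<^sup>2 / 2 * a * (\<Sum>j=1..J. 1 / sqrt j)"
    by (simp add: sum.distrib sum_distrib_left mult.commute)
  also have "\<dots> \<le> \<beta> J * D\<^sup>2 + G\<^sup>2 / 2 * a * (2 * sqrt J)"
  proof (intro add_mono mult_left_mono)
    have "incseq \<beta>" and \<beta>_nonneg: "\<And>j. 0 \<le> \<beta> j"
      unfolding \<beta>_def using a by (auto intro!: monoI divide_right_mono)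
    then have "(\<Sum>j=1..J. \<beta> j * (d (j - 1) - d j)) \<le> \<beta> J * (D\<^sup>2 - d J)"
      using sum_weighted_differences_le[of d "D\<^sup>2" \<beta>] d_le by blast
    also have "\<dots> \<le> \<beta> J * D\<^sup>2"
      using \<beta>_nonneg[of J] unfolding d_def by (simp add: mult_left_mono)
    finally show "(\<Sum>j=1..J. \<beta> j * (d (j - 1) - d j)) \<le> \<beta> J * D\<^sup>2" .
  qed (use sum_inverse_sqrt_le a in auto)
  also have "\<dots> = (D\<^sup>2 / (2 * a) + a * G\<^sup>2) * sqrt J"
    unfolding \<beta>_def using a by (simp add: field_simps)
  finally show ?thesis .
qed

lemma LIMSEQ_INF_if_excess_bound:
  fixes u b :: "nat \<Rightarrow> real" and f :: "'a \<Rightarrow> real"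
  assumes "S \<noteq> {}" "bdd_below (f ` S)" "b \<longlonglongrightarrow> 0"
    and lower: "\<forall>\<^sub>F n in sequentially. (INF x\<in>S. f x) \<le> u n"
    and upper: "\<And>x. x \<in> S \<Longrightarrow> \<forall>\<^sub>F n in sequentially. u n \<le> f x + b n"
  shows "u \<longlonglongrightarrow> (INF x\<in>S. f x)"
proof (rule order_tendstoI)
  fix y assume "y < (INF x\<in>S. f x)"
  with lower show "\<forall>\<^sub>F n in sequentially. y < u n"
    by (auto elim: eventually_mono)
next
  fix y assume "(INF x\<in>S. f x) < y"
  then obtain x where x: "x \<in> S" "f x < y"
    using cINF_less_iff[OF assms(1,2)] by blast
  have "\<forall>\<^sub>F n in sequentially. b n < y - f x"
    using x by (intro order_tendstoD(2)[OF assms(3)]) simp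
  with upper[OF x(1)] show "\<forall>\<^sub>F n in sequentially. u n < y"
    by eventually_elim auto
qed

section \<open>Convexity and integration\<close>

lemma convex_on_if_subgradient:
  fixes f :: "'a::real_inner \<Rightarrow> real"
  assumes "convex S" and subgrad: "\<And>x y. x \<in> S \<Longrightarrow> y \<in> S \<Longrightarrow> f x + g x \<bullet> (y - x) \<le> f y"
  shows "convex_on S f"
proof (rule convex_onI[OF _ \<open>convex S\<close>])
  fix t :: real and x y assume t: "0 < t" "t < 1" and xy: "x \<in> S" "y \<in> S"
  define z where "z = (1 - t) *\<^sub>R x + t *\<^sub>R y"
  have "z \<in> S"
    using \<open>convex S\<close> xy t unfolding z_def convex_alt by simp
  have "(1 - t) * (f z + g z \<bullet> (x - z)) + t * (f z + g z \<bullet> (y - z)) \<le> (1 - t) * f x + t * f y"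
    using subgrad[OF \<open>z \<in> S\<close> xy(1)] subgrad[OF \<open>z \<in> S\<close> xy(2)] t
    by (intro add_mono mult_left_mono) auto
  moreover have "(1 - t) * (g z \<bullet> (x - z)) + t * (g z \<bullet> (y - z)) = 0"
    unfolding z_def by (simp add: inner_diff_right inner_add_right algebra_simps)
  ultimately show "f z \<le> (1 - t) * f x + t * f y"
    by (simp add: algebra_simps)
qed

lemma convex_on_integral:
  fixes F :: "'a::real_vector \<Rightarrow> 'b \<Rightarrow> real"
  assumes "convex S" and int: "\<And>x. x \<in> S \<Longrightarrow> integrable M (F x)"
    and conv: "AE e in M. convex_on S (\<lambda>x. F x e)"
  shows "convex_on S (\<lambda>x. \<integral>e. F x e \<partial>M)"
proof (rule convex_onI[OF _ \<open>convex S\<close>])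
  fix t :: real and x y assume t: "0 < t" "t < 1" and xy: "x \<in> S" "y \<in> S"
  define z where "z = (1 - t) *\<^sub>R x + t *\<^sub>R y"
  have "z \<in> S"
    using \<open>convex S\<close> xy t unfolding z_def convex_alt by simp
  from conv have "AE e in M. F z e \<le> (1 - t) * F x e + t * F y e"
    by eventually_elim (use xy t in \<open>auto simp: z_def convex_on_def\<close>)
  then have "(\<integral>e. F z e \<partial>M) \<le> (\<integral>e. (1 - t) * F x e + t * F y e \<partial>M)"
    using int xy \<open>z \<in> S\<close> by (intro integral_mono_AE) auto
  then show "(\<integral>e. F z e \<partial>M) \<le> (1 - t) * (\<integral>e. F x e \<partial>M) + t * (\<integral>e. F y e \<partial>M)"
    using int xy by simp
qed

lemma integral_PiM_fresh_coordinate: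
  fixes h :: "'a \<Rightarrow> 'b \<Rightarrow> real"
  assumes "prob_space M" and I: "finite I" "i \<in> I"
    and fresh: "\<And>w y. Y (w(i := y)) = Y w"
    and int_h: "integrable (PiM I (\<lambda>_. M)) (\<lambda>w. h (w i) (Y w))"
    and int_H: "integrable (PiM I (\<lambda>_. M)) (\<lambda>w. \<integral>e. h e (Y w) \<partial>M)"
  shows "(\<integral>w. h (w i) (Y w) \<partial>PiM I (\<lambda>_. M)) = (\<integral>w. (\<integral>e. h e (Y w) \<partial>M) \<partial>PiM I (\<lambda>_. M))"
proof -
  interpret prob_space M by fact
  interpret product_sigma_finite "\<lambda>_. M" by unfold_locales
  have I_eq: "I = insert i (I - {i})" using I(2) by auto
  have "(\<integral>w. h (w i) (Y w) \<partial>PiM I (\<lambda>_. M))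
      = (\<integral>x. (\<integral>e. h e (Y x) \<partial>M) \<partial>PiM (I - {i}) (\<lambda>_. M))"
    using product_integral_insert[of "I - {i}" i "\<lambda>w. h (w i) (Y w)"] int_h I I_eq fresh by simp
  also have "\<dots> = (\<integral>w. (\<integral>e. h e (Y w) \<partial>M) \<partial>PiM I (\<lambda>_. M))"
    using product_integral_insert[of "I - {i}" i "\<lambda>w. \<integral>e. h e (Y w) \<partial>M"] int_H I I_eq fresh
    by (simp add: prob_space)
  finally show ?thesis .
qed

section \<open>The feasible region\<close>

lemma convex_feasible_set: "convex (feasible_set CM)"
proof -
  have "feasible_set CM = {c. \<forall>i. 0 \<le> c $ i} \<inter> {c. (\<chi> i. 1) \<bullet> c \<le> CM}"
    by (auto simp: feasible_set_def inner_vec_def)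
  moreover have "convex {c :: real^'n. \<forall>i. 0 \<le> c $ i}"
    by (auto simp: convex_def)
  ultimately show ?thesis
    using convex_halfspace_le by (metis convex_Int)
qed

lemma closed_feasible_set: "closed (feasible_set CM)"
  unfolding feasible_set_def
  by (intro closed_Collect_conj closed_Collect_all closed_Collect_le continuous_intros)

lemma zero_in_feasible_set: "0 \<le> CM \<Longrightarrow> 0 \<in> feasible_set CM"
  by (simp add: feasible_set_def)

lemma norm_le_if_in_feasible_set: "c \<in> feasible_set CM \<Longrightarrow> norm c \<le> CM"
  using norm_le_l1_cart[of c] by (simp add: feasible_set_def)

lemma inner_bounds_if_in_feasible_set:
  assumes "\<And>i. 0 \<le> e $ i \<and> e $ i \<le> B" and "c \<in> feasible_set CM"
  shows "0 \<le> e \<bullet> c \<and> e \<bullet> c \<le> B * CM"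
proof
  have c: "\<And>i. 0 \<le> c $ i" "(\<Sum>i\<in>UNIV. c $ i) \<le> CM"
    using assms(2) by (auto simp: feasible_set_def)
  have "0 \<le> B"
    using assms(1) order_trans by blast
  show "0 \<le> e \<bullet> c"
    unfolding inner_vec_def using assms(1) c by (auto intro: sum_nonneg)
  have "e \<bullet> c \<le> (\<Sum>i\<in>UNIV. B * c $ i)"
    unfolding inner_vec_def using assms(1) c by (auto intro!: sum_mono mult_right_mono)
  also have "\<dots> \<le> B * CM"
    using \<open>0 \<le> B\<close> c by (simp add: sum_distrib_left[symmetric] mult_left_mono)
  finally show "e \<bullet> c \<le> B * CM" .
qed

section \<open>The cost as a maximum of affine functions\<close>

definition cum_capacity :: "(nat \<Rightarrow> real) \<Rightarrow> nat \<Rightarrow> real" where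
  "cum_capacity cM q = (\<Sum>k=1..q. cM k)"

definition mining_line :: "(nat \<Rightarrow> real) \<Rightarrow> (nat \<Rightarrow> real) \<Rightarrow> nat \<Rightarrow> real \<Rightarrow> real" where
  "mining_line cM r k t = (\<Sum>j\<in>{1..<k}. (r j - r k) * cM j) + r k * t"

definition crit_level :: "nat \<Rightarrow> (nat \<Rightarrow> real) \<Rightarrow> real \<Rightarrow> nat" where
  "crit_level K cM t = (LEAST q. q \<in> {1..K} \<and> t \<le> cum_capacity cM q)"

lemma crit_type_eq_crit_level: "crit_type K cM e c = crit_level K cM (e \<bullet> c)"
  by (simp add: crit_type_def crit_level_def cum_capacity_def inner_vec_def)

lemma cost_eq_mining_line:
  "cost K cM r p e c = mining_line cM r (crit_type K cM e c) (e \<bullet> c) - p \<bullet> c"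
  unfolding cost_def mining_line_def Let_def
  by (simp add: inner_vec_def algebra_simps sum_subtractf sum_distrib_left)

lemma mining_line_Suc_diff:
  "mining_line cM r (Suc k) t - mining_line cM r k t = (r (Suc k) - r k) * (t - cum_capacity cM k)"
proof (cases "k = 0")
  case False
  then have "{1..<Suc k} = insert k {1..<k}" "{1..k} = insert k {1..<k}"
    by auto
  then show ?thesis
    unfolding mining_line_def cum_capacity_def
    by (simp add: algebra_simps sum_subtractf sum_distrib_left)
qed (simp add: mining_line_def cum_capacity_def algebra_simps)

lemma mining_line_diff:
  "l \<le> k \<Longrightarrow> mining_line cM r k t - mining_line cM r l t
    = (\<Sum>n=l..<k. (r (Suc n) - r n) * (t - cum_capacity cM n))"
  using sum_Suc_diff'[of l k "\<lambda>n. mining_line cM r n t"] by (simp add: mining_line_Suc_diff)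

lemma measurable_crit_level[measurable]:
  assumes [measurable]: "X \<in> borel_measurable M"
  shows "(\<lambda>x. crit_level K cM (X x)) \<in> measurable M (count_space UNIV)"
  unfolding crit_level_def by measurable

lemma borel_measurable_cost[measurable]:
  fixes X Y :: "'a \<Rightarrow> real^'n"
  assumes [measurable]: "X \<in> borel_measurable M" "Y \<in> borel_measurable M"
  shows "(\<lambda>x. cost K cM r p (X x) (Y x)) \<in> borel_measurable M"
  unfolding cost_eq_mining_line crit_type_eq_crit_level
  by (rule measurable_compose_countable[where g="\<lambda>x. crit_level K cM (X x \<bullet> Y x)"])
    (auto simp: mining_line_def)

lemma borel_measurable_sample_subgradient[measurable]:
  fixes X Y :: "'a \<Rightarrow> real^'n"
  assumes [measurable]: "X \<in> borel_measurable M" "Y \<in> borel_measurable M"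
  shows "(\<lambda>x. r (crit_type K cM (X x) (Y x)) *\<^sub>R X x - p) \<in> borel_measurable M"
  unfolding crit_type_eq_crit_level
  by (rule measurable_compose_countable[where g="\<lambda>x. crit_level K cM (X x \<bullet> Y x)"]) auto

locale mining_facility =
  fixes K :: nat and cM r :: "nat \<Rightarrow> real"
  assumes K_pos: "1 \<le> K"
    and cM_nonneg: "\<And>k. k \<in> {1..K} \<Longrightarrow> 0 \<le> cM k"
    and r_Suc_mono: "\<And>k. k \<in> {1..<K} \<Longrightarrow> r k \<le> r (Suc k)"
begin

lemma r_mono:
  assumes "1 \<le> a" "a \<le> b" "b \<le> K"
  shows "r a \<le> r b"
proof -
  have "0 \<le> (\<Sum>n=a..<b. r (Suc n) - r n)"
    using assms r_Suc_mono by (intro sum_nonneg) auto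
  then show ?thesis
    using sum_Suc_diff'[OF assms(2), of r] by simp
qed

lemma cum_capacity_mono: "a \<le> b \<Longrightarrow> b \<le> K \<Longrightarrow> cum_capacity cM a \<le> cum_capacity cM b"
  unfolding cum_capacity_def using cM_nonneg by (intro sum_mono2) auto

lemma
  assumes "t \<le> cum_capacity cM K"
  shows crit_level_mem: "crit_level K cM t \<in> {1..K}"
    and le_cum_capacity_crit_level: "t \<le> cum_capacity cM (crit_level K cM t)"
proof -
  have "K \<in> {1..K} \<and> t \<le> cum_capacity cM K"
    using K_pos assms by simp
  then have "crit_level K cM t \<in> {1..K} \<and> t \<le> cum_capacity cM (crit_level K cM t)"
    unfolding crit_level_def by (rule LeastI)
  then show "crit_level K cM t \<in> {1..K}" "t \<le> cum_capacity cM (crit_level K cM t)"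
    by auto
qed

lemma cum_capacity_less_below_crit_level:
  "q \<in> {1..<crit_level K cM t} \<Longrightarrow> q \<le> K \<Longrightarrow> cum_capacity cM q < t"
  unfolding crit_level_def using not_less_Least by fastforce

lemma mining_line_le_crit_level:
  assumes t: "t \<le> cum_capacity cM K" and k: "k \<in> {1..K}"
  shows "mining_line cM r k t \<le> mining_line cM r (crit_level K cM t) t"
proof -
  define l where "l = crit_level K cM t"
  have l: "l \<in> {1..K}" "t \<le> cum_capacity cM l"
    unfolding l_def using crit_level_mem[OF t] le_cum_capacity_crit_level[OF t] by auto
  show ?thesis
  proof (cases "k \<le> l")
    case True
    have "0 \<le> (\<Sum>n=k..<l. (r (Suc n) - r n) * (t - cum_capacity cM n))"
    proof (intro sum_nonneg mult_nonneg_nonneg)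
      fix n assume "n \<in> {k..<l}"
      then show "0 \<le> r (Suc n) - r n" "0 \<le> t - cum_capacity cM n"
        using r_Suc_mono[of n] cum_capacity_less_below_crit_level[of n t] k l unfolding l_def
        by auto
    qed
    then show ?thesis
      using mining_line_diff[OF True, of cM r t] unfolding l_def by linarith
  next
    case False
    have "(\<Sum>n=l..<k. (r (Suc n) - r n) * (t - cum_capacity cM n)) \<le> 0"
    proof (intro sum_nonpos mult_nonneg_nonpos)
      fix n assume "n \<in> {l..<k}"
      then show "0 \<le> r (Suc n) - r n" "t - cum_capacity cM n \<le> 0"
        using r_Suc_mono[of n] cum_capacity_mono[of l n] k l by auto
    qed
    then show ?thesis
      using mining_line_diff[of l k cM r t] False unfolding l_def by linarith
  qed
qed

lemma cost_subgradient:
  assumes "e \<bullet> c \<le> cum_capacity cM K" "e \<bullet> y \<le> cum_capacity cM K"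
  shows "cost K cM r p e c + (r (crit_type K cM e c) *\<^sub>R e - p) \<bullet> (y - c) \<le> cost K cM r p e y"
proof -
  define k where "k = crit_type K cM e c"
  have "mining_line cM r k (e \<bullet> y) \<le> mining_line cM r (crit_type K cM e y) (e \<bullet> y)"
    unfolding k_def crit_type_eq_crit_level
    using mining_line_le_crit_level crit_level_mem assms by blast
  moreover have "mining_line cM r k (e \<bullet> y) = mining_line cM r k (e \<bullet> c) + r k * (e \<bullet> (y - c))"
    by (simp add: mining_line_def inner_diff_right algebra_simps)
  ultimately show ?thesis
    unfolding cost_eq_mining_line k_def[symmetric] by (simp add: inner_diff_right algebra_simps)
qed

end

section \<open>Projected stochastic subgradient descent\<close>

locale sgd_setting = mining_facility K cM r
  for K :: nat and cM r :: "nat \<Rightarrow> real" +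
  fixes p :: "real^'n" and Deps :: "(real^'n) measure" and Ms :: nat and CM :: real
  defines "CM \<equiv> \<Sum>k=1..K. cM k"
  assumes CM_pos: "0 < CM"
    and r_nonneg: "0 \<le> r 1"
    and p_nonneg: "\<And>i. 0 \<le> p $ i"
    and prob: "prob_space Deps"
    and sets_Deps: "sets Deps = sets borel"
    and Deps_box: "AE e in Deps. e \<in> cbox 0 1"
    and Ms_pos: "1 \<le> Ms"
begin

sublocale Deps: prob_space Deps
  by (rule prob)

lemma borel_measurable_id_Deps[measurable]: "(\<lambda>e. e) \<in> borel_measurable Deps"
  using measurable_ident_sets[OF sets_Deps] .

abbreviation "Fc \<equiv> feasible_set CM"
abbreviation "fexp \<equiv> exp_cost K cM r p Deps"
abbreviation "rmax \<equiv> max (r K) (pmax p)"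

lemma cum_capacity_K: "cum_capacity cM K = CM"
  by (simp add: cum_capacity_def CM_def)

lemma Fc_nonempty: "Fc \<noteq> {}"
  using zero_in_feasible_set[of CM] CM_pos by auto

lemma inner_bounds_box:
  "e \<in> cbox 0 1 \<Longrightarrow> c \<in> Fc \<Longrightarrow> 0 \<le> e \<bullet> c \<and> e \<bullet> c \<le> CM"
  using inner_bounds_if_in_feasible_set[of e 1 c CM] by (simp add: mem_box_cart)

lemma cost_subgradient_Fc:
  assumes "e \<in> cbox 0 1" "c \<in> Fc" "y \<in> Fc"
  shows "cost K cM r p e c + (r (crit_type K cM e c) *\<^sub>R e - p) \<bullet> (y - c) \<le> cost K cM r p e y"
  using assms inner_bounds_box[of e] by (intro cost_subgradient) (auto simp: cum_capacity_K)

lemma r_bounds: "k \<in> {1..K} \<Longrightarrow> 0 \<le> r k \<and> r k \<le> rmax"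
  using r_mono[of 1 k] r_mono[of k K] r_nonneg by auto

lemma p_bounds: "0 \<le> p $ i \<and> p $ i \<le> rmax"
  using p_nonneg[of i] by (auto simp: pmax_def le_max_iff_disj intro: Max_ge)

lemma abs_cost_le:
  assumes e: "e \<in> cbox 0 1" and c: "c \<in> Fc"
  shows "\<bar>cost K cM r p e c\<bar> \<le> 2 * rmax * CM"
proof -
  define k where "k = crit_type K cM e c"
  have k: "k \<in> {1..K}"
    unfolding k_def crit_type_eq_crit_level
    using crit_level_mem inner_bounds_box[OF e c] cum_capacity_K by simp
  have "(\<Sum>j\<in>{1..<k}. (r j - r k) * cM j) \<le> 0"
    using k cM_nonneg r_mono by (intro sum_nonpos mult_nonpos_nonneg) auto
  moreover have "- (rmax * CM) \<le> (\<Sum>j\<in>{1..<k}. (r j - r k) * cM j)"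
  proof -
    have "(\<Sum>j\<in>{1..<k}. (- rmax) * cM j) \<le> (\<Sum>j\<in>{1..<k}. (r j - r k) * cM j)"
    proof (rule sum_mono)
      fix j assume "j \<in> {1..<k}"
      then have j: "j \<in> {1..K}" using k by auto
      show "- rmax * cM j \<le> (r j - r k) * cM j"
        using r_bounds[OF j] r_bounds[OF k] cM_nonneg[OF j] by (intro mult_right_mono) auto
    qed
    moreover have "rmax * (\<Sum>j\<in>{1..<k}. cM j) \<le> rmax * CM"
      unfolding CM_def using k cM_nonneg r_bounds[OF k] by (intro sum_mono2 mult_left_mono) auto
    ultimately show ?thesis
      by (simp add: sum_distrib_left sum_negf)
  qed
  moreover have "0 \<le> r k * (e \<bullet> c) \<and> r k * (e \<bullet> c) \<le> rmax * CM"
    using r_bounds[OF k] inner_bounds_box[OF e c] by (auto intro: mult_mono)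
  moreover have "0 \<le> p \<bullet> c \<and> p \<bullet> c \<le> rmax * CM"
    using inner_bounds_if_in_feasible_set[OF p_bounds c] .
  ultimately show ?thesis
    unfolding cost_eq_mining_line mining_line_def k_def[symmetric] by linarith
qed

lemma integrable_cost: "c \<in> Fc \<Longrightarrow> integrable Deps (\<lambda>e. cost K cM r p e c)"
  using Deps_box abs_cost_le
  by (intro Deps.integrable_const_bound[where B="2 * rmax * CM"]) (auto elim: eventually_mono)

lemma abs_exp_cost_le:
  assumes "c \<in> Fc"
  shows "\<bar>fexp c\<bar> \<le> 2 * rmax * CM"
proof -
  have "\<bar>fexp c\<bar> \<le> (\<integral>e. \<bar>cost K cM r p e c\<bar> \<partial>Deps)"
    unfolding exp_cost_def by (rule integral_abs_bound)
  also have "\<dots> \<le> (\<integral>e. 2 * rmax * CM \<partial>Deps)"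
    using Deps_box abs_cost_le assms integrable_cost
    by (intro integral_mono_AE) (auto elim: eventually_mono)
  finally show ?thesis
    by (simp add: Deps.prob_space)
qed

lemma bdd_below_exp_cost: "bdd_below (fexp ` Fc)"
  using abs_exp_cost_le by (intro bdd_belowI2[where m="- 2 * rmax * CM"]) force

lemma convex_on_exp_cost: "convex_on Fc fexp"
  unfolding exp_cost_def
proof (rule convex_on_integral[OF convex_feasible_set integrable_cost])
  show "AE e in Deps. convex_on Fc (\<lambda>c. cost K cM r p e c)"
    using Deps_box
  proof eventually_elim
    case (elim e)
    show ?case
      by (rule convex_on_if_subgradient[OF convex_feasible_set]) (rule cost_subgradient_Fc[OF elim])
  qed
qed

lemma borel_measurable_exp_cost[measurable]: "fexp \<in> borel_measurable borel"
proof -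
  have "(\<lambda>(c, e). cost K cM r p e c) \<in> borel_measurable (borel \<Otimes>\<^sub>M Deps)"
    by (simp add: split_beta')
  then show ?thesis
    unfolding exp_cost_def by (rule Deps.borel_measurable_lebesgue_integral)
qed

abbreviation "samples I \<equiv> PiM I (\<lambda>_. Deps)"

lemma prob_space_samples: "prob_space (samples I)"
  by (rule prob_space_PiM) (rule prob)

lemma borel_measurable_sample: "i \<in> I \<Longrightarrow> (\<lambda>w. w i) \<in> borel_measurable (samples I)"
  using measurable_compose[OF measurable_component_singleton[of i I "\<lambda>_. Deps"] borel_measurable_id_Deps]
  by simp

lemma AE_samples_in_box: "finite I \<Longrightarrow> AE w in samples I. \<forall>i\<in>I. w i \<in> cbox 0 1"
  using AE_PiM_component[of I "\<lambda>_. Deps", OF prob _ Deps_box] by (simp add: AE_finite_allI)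

lemma integrable_exp_cost_comp:
  assumes "finite_measure M" "Y \<in> borel_measurable M" "\<And>w. Y w \<in> Fc"
  shows "integrable M (\<lambda>w. fexp (Y w))"
  using assms abs_exp_cost_le
  by (intro finite_measure.integrable_const_bound[where B="2 * rmax * CM"]) auto

lemma
  assumes I: "finite I" "i \<in> I"
    and Y: "Y \<in> borel_measurable (samples I)" "\<And>w. Y w \<in> Fc"
    and fresh: "\<And>w y. Y (w(i := y)) = Y w"
  shows integrable_cost_fresh_sample: "integrable (samples I) (\<lambda>w. cost K cM r p (w i) (Y w))"
    and integral_cost_fresh_sample:
      "(\<integral>w. cost K cM r p (w i) (Y w) \<partial>samples I) = (\<integral>w. fexp (Y w) \<partial>samples I)"
proof -
  interpret samples: prob_space "samples I"
    by (rule prob_space_samples)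
  show int: "integrable (samples I) (\<lambda>w. cost K cM r p (w i) (Y w))"
    using AE_samples_in_box[OF I(1)] I(2) Y abs_cost_le borel_measurable_sample[OF I(2)]
    by (intro samples.integrable_const_bound[where B="2 * rmax * CM"]) (auto elim: eventually_mono)
  show "(\<integral>w. cost K cM r p (w i) (Y w) \<partial>samples I) = (\<integral>w. fexp (Y w) \<partial>samples I)"
    unfolding exp_cost_def
    by (rule integral_PiM_fresh_coordinate[OF prob I fresh int])
      (use integrable_exp_cost_comp[OF samples.finite_measure_axioms Y] in \<open>simp add: exp_cost_def\<close>)
qed

abbreviation "iter c1 w n \<equiv> sgd_iter K cM r p Ms c1 w n"

definition step_const :: real where
  "step_const = (if CARD('n) = 1 then CM else sqrt 2 * CM) / (sqrt (real CARD('n)) * rmax)"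

definition grad_bound :: real where
  "grad_bound = real CARD('n) * rmax"

definition rate_const :: real where
  "rate_const = (2 * CM)\<^sup>2 / (2 * step_const) + step_const * grad_bound\<^sup>2"

lemma step_size_eq: "step_size K r p CM j = step_const / sqrt j"
  by (simp add: step_size_def step_const_def Let_def)

lemma step_const_nonneg: "0 \<le> step_const"
  using CM_pos r_bounds[of K] K_pos by (simp add: step_const_def)

lemma grad_bound_eq_0_if_step_const_eq_0: "step_const = 0 \<Longrightarrow> grad_bound = 0"
  using CM_pos by (auto simp: step_const_def grad_bound_def split: if_splits)

lemma sgd_iter_Suc_eq:
  "iter c1 w (Suc n)
    = closest_point Fc (iter c1 w n - (step_const / sqrt (Suc n)) *\<^sub>R stoch_grad K cM r p Ms w (Suc n) (iter c1 w n))"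
  unfolding sgd_iter.simps Let_def CM_def[symmetric] step_size_eq ..

lemma sgd_iter_in_Fc: "c1 \<in> Fc \<Longrightarrow> iter c1 w n \<in> Fc"
proof (cases n)
  case (Suc m)
  show ?thesis
    unfolding Suc sgd_iter_Suc_eq by (rule closest_point_in_set[OF closed_feasible_set Fc_nonempty])
qed simp

lemma sgd_iter_fresh:
  "(\<And>j m. j \<in> {1..n} \<Longrightarrow> m \<in> {1..Ms} \<Longrightarrow> w (j, m) = w' (j, m))
    \<Longrightarrow> iter c1 w n = iter c1 w' n"
proof (induction n)
  case (Suc n)
  then have "iter c1 w n = iter c1 w' n"
    by auto
  moreover have "stoch_grad K cM r p Ms w (Suc n) c = stoch_grad K cM r p Ms w' (Suc n) c" for c
    unfolding stoch_grad_def using Suc.prems by (auto intro!: arg_cong2[where f="(*\<^sub>R)"] sum.cong)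
  ultimately show ?case
    unfolding sgd_iter_Suc_eq by simp
qed simp

lemma borel_measurable_sgd_iter:
  "{1..n} \<times> {1..Ms} \<subseteq> I \<Longrightarrow> (\<lambda>w. iter c1 w n) \<in> borel_measurable (samples I)"
proof (induction n)
  case (Suc n)
  then have [measurable]: "(\<lambda>w. iter c1 w n) \<in> borel_measurable (samples I)"
    by (auto simp: subset_iff)
  have [measurable]: "(\<lambda>w. w (Suc n, m)) \<in> borel_measurable (samples I)" if "m \<in> {1..Ms}" for m
    using Suc.prems that by (intro borel_measurable_sample) auto
  have [measurable]: "(\<lambda>w. stoch_grad K cM r p Ms w (Suc n) (iter c1 w n)) \<in> borel_measurable (samples I)"
    unfolding stoch_grad_def by measurable
  show ?case
    unfolding sgd_iter_Suc_eq
    by (rule borel_measurable_continuous_on[OF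
          continuous_on_closest_point[OF convex_feasible_set closed_feasible_set Fc_nonempty]]) measurable
qed simp

lemma norm_sample_subgradient_le:
  assumes "e \<in> cbox 0 1" "k \<in> {1..K}"
  shows "norm (r k *\<^sub>R e - p) \<le> grad_bound"
proof -
  have "norm (r k *\<^sub>R e - p) \<le> (\<Sum>i\<in>UNIV. \<bar>r k * e $ i - p $ i\<bar>)"
    using norm_le_l1_cart[of "r k *\<^sub>R e - p"] by simp
  also have "\<dots> \<le> (\<Sum>i\<in>(UNIV::'n set). rmax)"
  proof (rule sum_mono)
    fix i
    have "0 \<le> r k * e $ i \<and> r k * e $ i \<le> rmax"
      using assms r_bounds[OF assms(2)] by (auto simp: mem_box_cart intro: mult_le_one mult_right_le_one_le order_trans)
    then show "\<bar>r k * e $ i - p $ i\<bar> \<le> rmax"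
      using p_bounds[of i] by linarith
  qed
  finally show ?thesis
    by (simp add: grad_bound_def)
qed

lemma norm_stoch_grad_le:
  assumes "\<And>m. m \<in> {1..Ms} \<Longrightarrow> w (j, m) \<in> cbox 0 1" and "c \<in> Fc"
  shows "norm (stoch_grad K cM r p Ms w j c) \<le> grad_bound"
proof -
  have "norm (\<Sum>m=1..Ms. r (crit_type K cM (w (j, m)) c) *\<^sub>R w (j, m) - p)
      \<le> (\<Sum>m=1..Ms. norm (r (crit_type K cM (w (j, m)) c) *\<^sub>R w (j, m) - p))"
    by (rule norm_sum)
  also have "\<dots> \<le> (\<Sum>m=1..Ms. grad_bound)"
  proof (rule sum_mono)
    fix m assume m: "m \<in> {1..Ms}"
    have "crit_type K cM (w (j, m)) c \<in> {1..K}"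
      unfolding crit_type_eq_crit_level
      using crit_level_mem inner_bounds_box[OF assms(1)[OF m] assms(2)] cum_capacity_K by simp
    then show "norm (r (crit_type K cM (w (j, m)) c) *\<^sub>R w (j, m) - p) \<le> grad_bound"
      using norm_sample_subgradient_le assms(1)[OF m] by blast
  qed
  finally show ?thesis
    using Ms_pos by (simp add: stoch_grad_def field_simps)
qed

definition empirical_cost :: "(nat \<times> nat \<Rightarrow> real^'n) \<Rightarrow> nat \<Rightarrow> real^'n \<Rightarrow> real" where
  "empirical_cost w j c = (1 / real Ms) * (\<Sum>m=1..Ms. cost K cM r p (w (j, m)) c)"

lemma empirical_cost_subgradient:
  assumes "\<And>m. m \<in> {1..Ms} \<Longrightarrow> w (j, m) \<in> cbox 0 1" and "c \<in> Fc" "y \<in> Fc"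
  shows "empirical_cost w j c + stoch_grad K cM r p Ms w j c \<bullet> (y - c) \<le> empirical_cost w j y"
proof -
  have "(\<Sum>m=1..Ms. cost K cM r p (w (j, m)) c
          + (r (crit_type K cM (w (j, m)) c) *\<^sub>R w (j, m) - p) \<bullet> (y - c))
      \<le> (\<Sum>m=1..Ms. cost K cM r p (w (j, m)) y)"
    using assms by (intro sum_mono cost_subgradient_Fc) auto
  then show ?thesis
    unfolding empirical_cost_def stoch_grad_def inner_scaleR_left inner_sum_left
    by (simp add: sum.distrib add_divide_distrib[symmetric] divide_right_mono)
qed

lemma empirical_regret_le:
  assumes c1: "c1 \<in> Fc" and c: "c \<in> Fc"
    and box: "\<And>j m. j \<in> {1..J} \<Longrightarrow> m \<in> {1..Ms} \<Longrightarrow> w (j, m) \<in> cbox 0 1"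
  shows "(\<Sum>j=1..J. empirical_cost w j (iter c1 w (j - 1)) - empirical_cost w j c) \<le> rate_const * sqrt J"
proof -
  define g where "g j = stoch_grad K cM r p Ms w j (iter c1 w (j - 1))" for j
  have g_le: "norm (g j) \<le> grad_bound" if "j \<in> {1..J}" for j
    unfolding g_def using box that by (intro norm_stoch_grad_le sgd_iter_in_Fc c1) auto
  have "(\<Sum>j=1..J. empirical_cost w j (iter c1 w (j - 1)) - empirical_cost w j c)
      \<le> (\<Sum>j=1..J. g j \<bullet> (iter c1 w (j - 1) - c))"
  proof (rule sum_mono)
    fix j assume "j \<in> {1..J}"
    then have "empirical_cost w j (iter c1 w (j - 1)) + g j \<bullet> (c - iter c1 w (j - 1)) \<le> empirical_cost w j c"
      unfolding g_def using box by (intro empirical_cost_subgradient sgd_iter_in_Fc c1 c) auto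
    then show "empirical_cost w j (iter c1 w (j - 1)) - empirical_cost w j c \<le> g j \<bullet> (iter c1 w (j - 1) - c)"
      by (simp add: inner_diff_right)
  qed
  also have "\<dots> \<le> rate_const * sqrt J"
  proof (cases "step_const = 0")
    case True
    \<comment> \<open>max (r K) (pmax p) = 0: the step size is 0 by division by zero, but all subgradients vanish\<close>
    then have "g j = 0" if "j \<in> {1..J}" for j
      using g_le[OF that] grad_bound_eq_0_if_step_const_eq_0 by simp
    then show ?thesis
      using True by (simp add: rate_const_def)
  next
    case False
    have "(\<Sum>j=1..J. g j \<bullet> (iter c1 w (j - 1) - c))
        \<le> ((2 * CM)\<^sup>2 / (2 * step_const) + step_const * grad_bound\<^sup>2) * sqrt J"
    proof (rule projected_subgradient_regret[OF convex_feasible_set closed_feasible_set c])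
      show "0 < step_const"
        using False step_const_nonneg by simp
      show "iter c1 w (Suc j) = closest_point Fc (iter c1 w j - (step_const / sqrt (Suc j)) *\<^sub>R g (Suc j))" for j
        unfolding g_def by (simp only: sgd_iter_Suc_eq diff_Suc_1)
      show "norm (iter c1 w j - c) \<le> 2 * CM" for j
        using norm_triangle_ineq4[of "iter c1 w j" c] norm_le_if_in_feasible_set[OF sgd_iter_in_Fc[OF c1, of w j]]
          norm_le_if_in_feasible_set[OF c] by linarith
    qed (rule g_le)
    then show ?thesis
      unfolding rate_const_def by (simp add: mult.commute)
  qed
  finally show ?thesis .
qed

lemma
  assumes I: "finite I" "{j} \<times> {1..Ms} \<subseteq> I"
    and Y: "Y \<in> borel_measurable (samples I)" "\<And>w. Y w \<in> Fc"
    and fresh: "\<And>w m y. m \<in> {1..Ms} \<Longrightarrow> Y (w((j, m) := y)) = Y w"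
  shows integrable_empirical_cost: "integrable (samples I) (\<lambda>w. empirical_cost w j (Y w))"
    and integral_empirical_cost:
      "(\<integral>w. empirical_cost w j (Y w) \<partial>samples I) = (\<integral>w. fexp (Y w) \<partial>samples I)"
proof -
  have jm: "(j, m) \<in> I" if "m \<in> {1..Ms}" for m
    using I(2) that by auto
  have int: "integrable (samples I) (\<lambda>w. cost K cM r p (w (j, m)) (Y w))" if "m \<in> {1..Ms}" for m
    by (rule integrable_cost_fresh_sample[where Y=Y, OF I(1) jm[OF that] Y fresh[OF that]])
  then show "integrable (samples I) (\<lambda>w. empirical_cost w j (Y w))"
    unfolding empirical_cost_def by (intro integrable_mult_right Bochner_Integration.integrable_sum)
  have "(\<integral>w. empirical_cost w j (Y w) \<partial>samples I)
      = (1 / real Ms) * (\<Sum>m=1..Ms. \<integral>w. cost K cM r p (w (j, m)) (Y w) \<partial>samples I)"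
    unfolding empirical_cost_def using int by (simp add: Bochner_Integration.integral_sum)
  also have "\<dots> = (\<integral>w. fexp (Y w) \<partial>samples I)"
    using integral_cost_fresh_sample[where Y=Y, OF I(1) jm Y fresh] Ms_pos by simp
  finally show "(\<integral>w. empirical_cost w j (Y w) \<partial>samples I) = (\<integral>w. fexp (Y w) \<partial>samples I)" .
qed

lemma expected_regret_le:
  assumes c1: "c1 \<in> Fc" and c: "c \<in> Fc"
  shows "(\<Sum>j=1..J. (\<integral>w. fexp (iter c1 w (j - 1)) \<partial>samples ({1..J} \<times> {1..Ms})) - fexp c)
    \<le> rate_const * sqrt J"
proof -
  define I where "I = {1..J} \<times> {1..Ms}"
  interpret samples: prob_space "samples I"
    by (rule prob_space_samples)
  have "finite I"
    by (simp add: I_def)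
  have I: "finite I" "{j} \<times> {1..Ms} \<subseteq> I" if "j \<in> {1..J}" for j
    using that unfolding I_def by auto
  have iter_meas: "(\<lambda>w. iter c1 w (j - 1)) \<in> borel_measurable (samples I)" if "j \<in> {1..J}" for j
    using that unfolding I_def by (intro borel_measurable_sgd_iter) auto
  have iter_fresh: "iter c1 (w((j, m) := y)) (j - 1) = iter c1 w (j - 1)" for j m w y
    by (rule sgd_iter_fresh) auto
  define regret where "regret w = (\<Sum>j=1..J. empirical_cost w j (iter c1 w (j - 1)) - empirical_cost w j c)" for w
  have int_iter: "integrable (samples I) (\<lambda>w. empirical_cost w j (iter c1 w (j - 1)))"
    and int_c: "integrable (samples I) (\<lambda>w. empirical_cost w j c)" if "j \<in> {1..J}" for j
    using integrable_empirical_cost[where Y="\<lambda>w. iter c1 w (j - 1)", OF I[OF that] iter_meas[OF that]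
        sgd_iter_in_Fc[OF c1] iter_fresh]
      integrable_empirical_cost[where Y="\<lambda>_. c", OF I[OF that]] c by auto
  have "(\<Sum>j=1..J. (\<integral>w. fexp (iter c1 w (j - 1)) \<partial>samples I) - fexp c) = (\<integral>w. regret w \<partial>samples I)"
    using integral_empirical_cost[where Y="\<lambda>w. iter c1 w (j - 1)" for j,
        OF I iter_meas sgd_iter_in_Fc[OF c1] iter_fresh]
      integral_empirical_cost[where Y="\<lambda>_. c", OF I] c int_iter int_c
    by (simp add: regret_def Bochner_Integration.integral_sum samples.prob_space)
  also have "\<dots> \<le> rate_const * sqrt J"
  proof (rule samples.integral_le_const)
    show "integrable (samples I) regret"
      unfolding regret_def using int_iter int_c by auto
    show "AE w in samples I. regret w \<le> rate_const * sqrt J"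
      using AE_samples_in_box[OF \<open>finite I\<close>]
    proof (rule eventually_mono)
      fix w :: "nat \<times> nat \<Rightarrow> real^'n" assume "\<forall>i\<in>I. w i \<in> cbox 0 1"
      then show "regret w \<le> rate_const * sqrt J"
        unfolding regret_def by (intro empirical_regret_le[OF c1 c]) (auto simp: I_def)
    qed
  qed
  finally show ?thesis
    by (simp add: I_def)
qed

lemma sgd_output_eq: "sgd_output K cM r p Ms c1 w J = (\<Sum>j=1..J. (1 / real J) *\<^sub>R iter c1 w (j - 1))"
  by (simp add: sgd_output_def scaleR_sum_right)

lemma sgd_output_in_Fc: "1 \<le> J \<Longrightarrow> c1 \<in> Fc \<Longrightarrow> sgd_output K cM r p Ms c1 w J \<in> Fc"
  unfolding sgd_output_eq by (rule convex_sum[OF _ convex_feasible_set]) (auto intro: sgd_iter_in_Fc)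

lemma integrable_exp_cost_sgd_output:
  assumes "1 \<le> J" "c1 \<in> Fc"
  shows "integrable (samples ({1..J} \<times> {1..Ms})) (\<lambda>w. fexp (sgd_output K cM r p Ms c1 w J))"
proof (rule integrable_exp_cost_comp)
  show "(\<lambda>w. sgd_output K cM r p Ms c1 w J) \<in> borel_measurable (samples ({1..J} \<times> {1..Ms}))"
    unfolding sgd_output_eq by (intro borel_measurable_sum borel_measurable_scaleR borel_measurable_sgd_iter) auto
qed (use assms prob_space_samples sgd_output_in_Fc in \<open>auto simp: prob_space_def\<close>)

lemma INF_le_expected_output:
  assumes "1 \<le> J" "c1 \<in> Fc"
  shows "(INF c\<in>Fc. fexp c) \<le> (\<integral>w. fexp (sgd_output K cM r p Ms c1 w J) \<partial>samples ({1..J} \<times> {1..Ms}))"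
proof -
  interpret samples: prob_space "samples ({1..J} \<times> {1..Ms})"
    by (rule prob_space_samples)
  show ?thesis
    using assms sgd_output_in_Fc bdd_below_exp_cost
    by (intro samples.integral_ge_const integrable_exp_cost_sgd_output AE_I2) (auto intro: cINF_lower)
qed

lemma expected_output_le:
  assumes J: "1 \<le> J" and c1: "c1 \<in> Fc" and c: "c \<in> Fc"
  shows "(\<integral>w. fexp (sgd_output K cM r p Ms c1 w J) \<partial>samples ({1..J} \<times> {1..Ms}))
    \<le> fexp c + rate_const / sqrt J"
proof -
  define I where "I = {1..J} \<times> {1..Ms}"
  interpret samples: prob_space "samples I"
    by (rule prob_space_samples)
  have int_iter: "integrable (samples I) (\<lambda>w. fexp (iter c1 w (j - 1)))" if "j \<in> {1..J}" for j
    using that sgd_iter_in_Fc[OF c1]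
    by (intro integrable_exp_cost_comp samples.finite_measure_axioms borel_measurable_sgd_iter)
      (auto simp: I_def)
  have "(\<integral>w. fexp (sgd_output K cM r p Ms c1 w J) \<partial>samples I)
      \<le> (\<integral>w. (\<Sum>j=1..J. (1 / real J) * fexp (iter c1 w (j - 1))) \<partial>samples I)"
  proof (rule integral_mono)
    show "fexp (sgd_output K cM r p Ms c1 w J) \<le> (\<Sum>j=1..J. (1 / real J) * fexp (iter c1 w (j - 1)))" for w
      unfolding sgd_output_eq
      by (rule convex_on_sum[OF _ _ convex_on_exp_cost]) (use J sgd_iter_in_Fc[OF c1] in auto)
  qed (use integrable_exp_cost_sgd_output[OF J c1] int_iter in \<open>auto simp: I_def\<close>)
  also have "\<dots>
      = (1 / real J) * (\<Sum>j=1..J. (\<integral>w. fexp (iter c1 w (j - 1)) \<partial>samples I) - fexp c) + fexp c"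
    using int_iter J by (simp add: Bochner_Integration.integral_sum sum_distrib_left sum_subtractf algebra_simps)
  also have "\<dots> \<le> (1 / real J) * (rate_const * sqrt J) + fexp c"
    using expected_regret_le[OF c1 c, of J] by (simp add: I_def divide_right_mono)
  also have "\<dots> = fexp c + rate_const / sqrt J"
    using J by (simp add: field_simps)
  finally show ?thesis
    by (simp add: I_def)
qed

lemma expected_output_tendsto_INF:
  assumes "c1 \<in> Fc"
  shows "(\<lambda>J. \<integral>w. fexp (sgd_output K cM r p Ms c1 w J) \<partial>samples ({1..J} \<times> {1..Ms}))
    \<longlonglongrightarrow> (INF c\<in>Fc. fexp c)"
proof (rule LIMSEQ_INF_if_excess_bound[OF Fc_nonempty bdd_below_exp_cost])
  show "(\<lambda>J. rate_const / sqrt J) \<longlonglongrightarrow> 0"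
    by (rule real_tendsto_divide_at_top[OF tendsto_const filterlim_compose[OF sqrt_at_top filterlim_real_sequentially]])
  show "\<forall>\<^sub>F J in sequentially.
      (INF c\<in>Fc. fexp c) \<le> (\<integral>w. fexp (sgd_output K cM r p Ms c1 w J) \<partial>samples ({1..J} \<times> {1..Ms}))"
    using eventually_ge_at_top[of 1] by eventually_elim (rule INF_le_expected_output[OF _ assms])
  show "\<forall>\<^sub>F J in sequentially.
      (\<integral>w. fexp (sgd_output K cM r p Ms c1 w J) \<partial>samples ({1..J} \<times> {1..Ms}))
        \<le> fexp c + rate_const / sqrt J"
    if "c \<in> Fc" for c
    using eventually_ge_at_top[of 1] by eventually_elim (rule expected_output_le[OF _ assms that])
qed

end

theorem theorem2:
  fixes K Ms :: nat and cM r :: "nat \<Rightarrow> real" and p c1 :: "real^'n"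
    and Deps :: "(real^'n) measure"
  assumes K: "K \<ge> 1"
    and cM_pos: "\<forall>k\<in>{1..K}. cM k > 0"
    and r_nonneg: "r 1 \<ge> 0"
    and r_incr: "\<forall>k\<in>{1..<K}. r k < r (Suc k)"
    and p_nonneg: "\<forall>i. p $ i \<ge> 0"
    and prob: "prob_space Deps"
    and borel: "sets Deps = sets borel"
    and supp: "AE e in Deps. \<forall>i. e $ i \<in> {0..1}"
    and Ms: "Ms \<ge> 1"
    and c1: "c1 \<in> feasible_set (\<Sum>k=1..K. cM k)"
  shows "convex_on (feasible_set (\<Sum>k=1..K. cM k)) (exp_cost K cM r p Deps)
    \<and> ((\<lambda>J. \<integral>w. exp_cost K cM r p Deps (sgd_output K cM r p Ms c1 w J)
                   \<partial>(PiM ({1..J} \<times> {1..Ms}) (\<lambda>_. Deps)))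
        \<longlonglongrightarrow> (INF c\<in>feasible_set (\<Sum>k=1..K. cM k). exp_cost K cM r p Deps c))"
proof -
  have "mining_facility K cM r"
    using K cM_pos r_incr by unfold_locales (auto intro: less_imp_le)
  moreover have "0 < (\<Sum>k=1..K. cM k)"
    using cM_pos K by (intro sum_pos) auto
  moreover have "AE e in Deps. e \<in> cbox 0 1"
    using supp by (simp add: mem_box_cart)
  ultimately interpret sgd_setting K cM r p Deps Ms "\<Sum>k=1..K. cM k"
    using r_nonneg p_nonneg prob borel Ms by (intro sgd_setting.intro sgd_setting_axioms.intro) simp_all
  show ?thesis
    using convex_on_exp_cost expected_output_tendsto_INF[OF c1] by blast
qed

end
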